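(* Let $S$ be a monoid such that the word $xy$ ($x\ne y$) is an isoterm for $S$. Suppose that $S$ satisfies an identity $\mathbf u\approx\mathbf v$ and that there are a substitution $\Theta:\mathfrak A\to\mathfrak A^+$ and a variable $x$ that occurs exactly twice in both $\mathbf U=\Theta(\mathbf u)$ and $\mathbf V=\Theta(\mathbf v)$. Then $l_{\mathbf u,\mathbf v}(\Theta^{-1}_{\mathbf u}({}_{1\mathbf U}x))=\Theta^{-1}_{\mathbf v}({}_{1\mathbf V}x)$ and $l_{\mathbf u,\mathbf v}(\Theta^{-1}_{\mathbf u}({}_{2\mathbf U}x))=\Theta^{-1}_{\mathbf v}({}_{2\mathbf V}x)$.
   Context: $\mathfrak A$ is a countably infinite alphabet of variables; words are elements of $\mathfrak A^+$; a substitution is a homomorphism $\Theta:\mathfrak A^+\to\mathfrak A^+$. A monoid $S$ satisfies $\mathbf u\approx\mathbf v$ if both sides agree under all evaluations in $S$; a word is an isoterm for $S$ if it forms no nontrivial identity of $S$. ${}_{i\mathbf w}z$ denotes the $i$-th occurrence of $z$ in $\mathbf w$, and $\mathrm{occ}_{\mathbf w}(z)$ the number of occurrences. $l_{\mathbf u,\mathbf v}$ is the map ${}_{i\mathbf u}z\mapsto{}_{i\mathbf v}z$ for $i\le\min(\mathrm{occ}_{\mathbf u}(z),\mathrm{occ}_{\mathbf v}(z))$. If $\mathbf u=a_1\cdots a_k$ (letters) and $\mathbf U=\Theta(\mathbf u)=\Theta(a_1)\cdots\Theta(a_k)$, then each occurrence $c$ of a variable in $\mathbf U$ lies in a unique block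 $\Theta(a_j)$; $\Theta^{-1}_{\mathbf u}(c)$ is defined as the occurrence in $\mathbf u$ given by the $j$-th letter $a_j$. *)

theory Defs
  imports Main
begin

text \<open>An occurrence of a variable is encoded as a pair
  (z, i), meaning the i-th occurrence of z (i counted from 1).\<close>

type_synonym var = nat
type_synonym word = "var list"
type_synonym occurrence = "var \<times> nat"

definition is_word :: "word \<Rightarrow> bool" where
  "is_word w \<longleftrightarrow> w \<noteq> []"

definition is_subst :: "(var \<Rightarrow> word) \<Rightarrow> bool" where
  "is_subst \<Theta> \<longleftrightarrow> (\<forall>a. \<Theta> a \<noteq> [])"

definition apply_subst :: "(var \<Rightarrow> word) \<Rightarrow> word \<Rightarrow> word" where
  "apply_subst \<Theta> w = concat (map \<Theta> w)"

definition eval_word :: "(var \<Rightarrow> 'a::monoid_mult) \<Rightarrow> word \<Rightarrow> 'a" where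
  "eval_word \<phi> w = prod_list (map \<phi> w)"

definition satisfies :: "'a::monoid_mult itself \<Rightarrow> word \<Rightarrow> word \<Rightarrow> bool" where
  "satisfies S u v \<longleftrightarrow> (\<forall>\<phi> :: var \<Rightarrow> 'a. eval_word \<phi> u = eval_word \<phi> v)"

definition isoterm :: "'a::monoid_mult itself \<Rightarrow> word \<Rightarrow> bool" where
  "isoterm S w \<longleftrightarrow> (\<forall>w'. is_word w' \<longrightarrow> satisfies S w w' \<longrightarrow> w' = w)"

definition occ :: "word \<Rightarrow> var \<Rightarrow> nat" where
  "occ w z = count_list w z"

definition occ_at :: "word \<Rightarrow> nat \<Rightarrow> occurrence" where
  "occ_at w p = (w ! p, count_list (take (Suc p) w) (w ! p))"

definition pos_of_occ :: "word \<Rightarrow> occurrence \<Rightarrow> nat" where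
  "pos_of_occ w c = (THE p. p < length w \<and> occ_at w p = c)"

definition block_index :: "(var \<Rightarrow> word) \<Rightarrow> word \<Rightarrow> nat \<Rightarrow> nat" where
  "block_index \<Theta> u p = (THE j. j < length u \<and>
      length (apply_subst \<Theta> (take j u)) \<le> p \<and>
      p < length (apply_subst \<Theta> (take (Suc j) u)))"

definition theta_inv :: "(var \<Rightarrow> word) \<Rightarrow> word \<Rightarrow> occurrence \<Rightarrow> occurrence" where
  "theta_inv \<Theta> u c = occ_at u (block_index \<Theta> u (pos_of_occ (apply_subst \<Theta> u) c))"

definition l_map :: "word \<Rightarrow> word \<Rightarrow> occurrence \<Rightarrow> occurrence option" where
  "l_map u v c = (if 1 \<le> snd c \<and> snd c \<le> min (occ u (fst c)) (occ v (fst c))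
                  then Some c else None)"

end

theory Submission
  imports Defs "HOL-Library.Multiset"
begin

text \<open>Let \<open>u\<^sub>x\<close> be the subword of \<open>u\<close> formed by the letters \<open>t\<close> with \<open>x\<close> in \<open>\<Theta>(t)\<close>,
  and likewise \<open>v\<^sub>x\<close>.  Deleting the other letters does not change which block of \<open>\<Theta>(u)\<close>
  carries a given occurrence of \<open>x\<close>, so \<open>\<Theta>\<^sup>-\<^sup>1\<^sub>u\<close> of both occurrences of \<open>x\<close> is determined by
  \<open>u\<^sub>x\<close>, a word of length at most 2.  Sending the deleted letters to 1 shows that \<open>S\<close>
  satisfies \<open>u\<^sub>x \<approx> v\<^sub>x\<close>.  Since \<open>xy\<close> is an isoterm, \<open>S\<close> satisfies neither \<open>x\<^sup>k \<approx> x\<^sup>m\<close>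
  with \<open>k \<le> 1\<close>, \<open>k \<noteq> m\<close> (it would yield \<open>xy \<approx> x\<^sup>n y\<close> with \<open>n \<noteq> 1\<close>) nor \<open>ts \<approx> st\<close>; hence
  every identity of \<open>S\<close> between words of length at most 2 is trivial, and \<open>u\<^sub>x = v\<^sub>x\<close>.\<close>

lemma count_list_take_mono:
  "m \<le> n \<Longrightarrow> count_list (take m w) z \<le> count_list (take n w) z"
  by (metis le_add1 count_list_append le_Suc_ex take_add)

lemma inj_on_occ_at: "inj_on (occ_at w) {..<length w}"
proof -
  have less: "count_list (take (Suc p) w) (w ! p) < count_list (take (Suc q) w) (w ! q)"
    if "p < q" "q < length w" "w ! p = w ! q" for p q
  proof -
    have "count_list (take (Suc p) w) (w ! q) \<le> count_list (take q w) (w ! q)"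
      using that by (intro count_list_take_mono) simp
    moreover have "count_list (take (Suc q) w) (w ! q) = count_list (take q w) (w ! q) + 1"
      using that by (simp add: take_Suc_conv_app_nth)
    ultimately show ?thesis using that by simp
  qed
  show ?thesis
  proof (rule inj_onI)
    fix p q assume "p \<in> {..<length w}" "q \<in> {..<length w}" "occ_at w p = occ_at w q"
    then show "p = q"
      using less[of p q] less[of q p] by (auto simp: occ_at_def) (metis linorder_neq_iff)
  qed
qed

lemma pos_of_occ_occ_at: "p < length w \<Longrightarrow> pos_of_occ w (occ_at w p) = p"
  unfolding pos_of_occ_def
  by (rule the_equality) (auto dest: inj_onD[OF inj_on_occ_at])

lemma occ_at_append_Cons: "occ_at (A @ z # B) (length A) = (z, count_list A z + 1)"
  by (simp add: occ_at_def nth_append take_append)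

lemma apply_subst_append [simp]:
  "apply_subst \<Theta> (xs @ ys) = apply_subst \<Theta> xs @ apply_subst \<Theta> ys"
  by (simp add: apply_subst_def)

lemma length_apply_subst_take_mono:
  "m \<le> n \<Longrightarrow> length (apply_subst \<Theta> (take m u)) \<le> length (apply_subst \<Theta> (take n u))"
  by (metis le_add1 apply_subst_append length_append le_Suc_ex take_add)

lemma block_index_append_Cons:
  assumes u: "u = u1 @ t # u2"
    and p: "length (apply_subst \<Theta> u1) \<le> p" "p < length (apply_subst \<Theta> u1) + length (\<Theta> t)"
  shows "block_index \<Theta> u p = length u1"
  unfolding block_index_def
proof (rule the_equality)
  have take_u: "take (length u1) u = u1" "take (Suc (length u1)) u = u1 @ [t]"
    using u by auto
  then show "length u1 < length u \<and> length (apply_subst \<Theta> (take (length u1) u)) \<le> p \<and>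
      p < length (apply_subst \<Theta> (take (Suc (length u1)) u))"
    using p u by (simp add: apply_subst_def)
  fix j assume j: "j < length u \<and> length (apply_subst \<Theta> (take j u)) \<le> p \<and>
      p < length (apply_subst \<Theta> (take (Suc j) u))"
  show "j = length u1"
  proof (rule ccontr)
    assume "j \<noteq> length u1"
    then consider "Suc j \<le> length u1" | "Suc (length u1) \<le> j" by linarith
    then show False
    proof cases
      case 1
      from length_apply_subst_take_mono[OF 1, of \<Theta> u] j take_u p show False by simp
    next
      case 2
      from length_apply_subst_take_mono[OF 2, of \<Theta> u] j take_u p show False
        by (simp add: apply_subst_def)
    qed
  qed
qed

lemma theta_inv_append_Cons:
  assumes "u = u1 @ t # u2" "\<Theta> t = D @ x # E"
  shows "theta_inv \<Theta> u (x, count_list (apply_subst \<Theta> u1 @ D) x + 1) = (t, count_list u1 t + 1)"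
proof -
  let ?A = "apply_subst \<Theta> u1 @ D"
  have U: "apply_subst \<Theta> u = ?A @ x # (E @ apply_subst \<Theta> u2)"
    using assms by (simp add: apply_subst_def)
  have "pos_of_occ (apply_subst \<Theta> u) (x, count_list ?A x + 1) = length ?A"
    using pos_of_occ_occ_at[of "length ?A" "?A @ x # E @ apply_subst \<Theta> u2"]
    unfolding U occ_at_append_Cons by simp
  moreover have "block_index \<Theta> u (length ?A) = length u1"
    by (rule block_index_append_Cons[OF assms(1)]) (simp_all add: assms(2))
  ultimately show ?thesis
    unfolding theta_inv_def using assms(1) by (simp add: occ_at_append_Cons)
qed

lemma split_list_nth_occurrence:
  "i < count_list w x \<Longrightarrow> \<exists>A B. w = A @ x # B \<and> count_list A x = i"
proof (induction w arbitrary: i)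
  case Nil
  then show ?case by simp
next
  case (Cons y w)
  show ?case
  proof (cases "y = x \<and> i = 0")
    case True
    then show ?thesis by (intro exI[of _ "[]"] exI[of _ w]) simp
  next
    case False
    then have "(if y = x then i - 1 else i) < count_list w x"
      using Cons.prems by (auto split: if_splits)
    from Cons.IH[OF this] obtain A B
      where "w = A @ x # B" "count_list A x = (if y = x then i - 1 else i)" by blast
    then show ?thesis using False by (intro exI[of _ "y # A"] exI[of _ B]) auto
  qed
qed

lemma concat_map_eq_append_Cons:
  "concat (map \<Theta> u) = A @ x # B \<Longrightarrow>
   \<exists>u1 t u2 D E. u = u1 @ t # u2 \<and> \<Theta> t = D @ x # E \<and> A = concat (map \<Theta> u1) @ D"
proof (induction u arbitrary: A)
  case Nil
  then show ?case by simp
next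
  case (Cons y u)
  have "\<Theta> y @ concat (map \<Theta> u) = A @ x # B" using Cons.prems by simp
  then obtain us where
    "\<Theta> y = A @ us \<and> us @ concat (map \<Theta> u) = x # B \<or>
     \<Theta> y @ us = A \<and> concat (map \<Theta> u) = us @ x # B"
    by (auto simp: append_eq_append_conv2)
  then show ?case
  proof (elim disjE conjE)
    assume y: "\<Theta> y = A @ us" and rest: "us @ concat (map \<Theta> u) = x # B"
    show ?case
    proof (cases us)
      case Nil
      with rest Cons.IH[of "[]"] obtain u1 t u2 D E where
        "u = u1 @ t # u2" "\<Theta> t = D @ x # E" "[] = concat (map \<Theta> u1) @ D" by auto
      then show ?thesis using y Nil
        by (intro exI[of _ "y # u1"] exI[of _ t] exI[of _ u2] exI[of _ D] exI[of _ E]) auto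
    next
      case (Cons c us')
      with y rest show ?thesis
        by (intro exI[of _ "[]"] exI[of _ y] exI[of _ u] exI[of _ A] exI[of _ us']) auto
    qed
  next
    assume y: "\<Theta> y @ us = A" and rest: "concat (map \<Theta> u) = us @ x # B"
    from Cons.IH[OF rest] obtain u1 t u2 D E where
      "u = u1 @ t # u2" "\<Theta> t = D @ x # E" "us = concat (map \<Theta> u1) @ D" by blast
    then show ?thesis using y
      by (intro exI[of _ "y # u1"] exI[of _ t] exI[of _ u2] exI[of _ D] exI[of _ E]) auto
  qed
qed

lemma apply_subst_nth_occurrence:
  assumes "i < count_list (apply_subst \<Theta> u) x"
  obtains u1 t u2 D E where "u = u1 @ t # u2" "\<Theta> t = D @ x # E"
    "count_list (apply_subst \<Theta> u1 @ D) x = i"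
proof -
  obtain A B where AB: "apply_subst \<Theta> u = A @ x # B" "count_list A x = i"
    using split_list_nth_occurrence[OF assms] by blast
  with concat_map_eq_append_Cons[of \<Theta> u A x B] show thesis
    using that by (auto simp: apply_subst_def)
qed

lemma theta_inv_in_range:
  assumes "i < count_list (apply_subst \<Theta> u) x"
  shows "1 \<le> snd (theta_inv \<Theta> u (x, Suc i)) \<and>
    snd (theta_inv \<Theta> u (x, Suc i)) \<le> count_list u (fst (theta_inv \<Theta> u (x, Suc i)))"
proof -
  obtain u1 t u2 D E where "u = u1 @ t # u2" "\<Theta> t = D @ x # E"
    "count_list (apply_subst \<Theta> u1 @ D) x = i"
    using apply_subst_nth_occurrence[OF assms] .
  with theta_inv_append_Cons[of u u1 t u2 \<Theta> D x E] show ?thesis by simp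
qed

lemma count_list_apply_subst_filter:
  "count_list (apply_subst \<Theta> (filter (\<lambda>t. x \<in> set (\<Theta> t)) w)) x =
   count_list (apply_subst \<Theta> w) x"
  by (induction w) (auto simp: apply_subst_def count_list_0_iff)

lemma length_filter_le_count_list_apply_subst:
  "length (filter (\<lambda>t. x \<in> set (\<Theta> t)) w) \<le> count_list (apply_subst \<Theta> w) x"
proof (induction w)
  case Nil
  then show ?case by (simp add: apply_subst_def)
next
  case (Cons y w)
  have "x \<in> set (\<Theta> y) \<Longrightarrow> 1 \<le> count_list (\<Theta> y) x"
    by (metis count_list_0_iff less_one not_le)
  with Cons show ?case by (auto simp: apply_subst_def)
qed

lemma theta_inv_filter:
  assumes "i < count_list (apply_subst \<Theta> u) x"
  shows "theta_inv \<Theta> (filter (\<lambda>t. x \<in> set (\<Theta> t)) u) (x, Suc i) = theta_inv \<Theta> u (x, Suc i)"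
proof -
  let ?P = "\<lambda>t. x \<in> set (\<Theta> t)"
  obtain u1 t u2 D E where u: "u = u1 @ t # u2" and t: "\<Theta> t = D @ x # E"
    and i: "count_list (apply_subst \<Theta> u1 @ D) x = i"
    using apply_subst_nth_occurrence[OF assms] .
  have "?P t" using t by simp
  then have "filter ?P u = filter ?P u1 @ t # filter ?P u2"
    and "count_list (filter ?P u1) t = count_list u1 t"
    by (simp add: u, induction u1) auto
  moreover have "count_list (apply_subst \<Theta> (filter ?P u1) @ D) x = i"
    using i count_list_apply_subst_filter[of \<Theta> x u1] by simp
  ultimately show ?thesis
    using theta_inv_append_Cons[of u u1 t u2 \<Theta> D x E]
      theta_inv_append_Cons[of "filter ?P u" "filter ?P u1" t "filter ?P u2" \<Theta> D x E] t u i
    by simp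
qed

lemma satisfies_sym: "satisfies S u v \<Longrightarrow> satisfies S v u"
  unfolding satisfies_def by metis

lemma satisfies_filter:
  fixes S :: "'a::monoid_mult itself"
  assumes "satisfies S u v"
  shows "satisfies S (filter P u) (filter P v)"
  unfolding satisfies_def
proof
  fix \<phi> :: "var \<Rightarrow> 'a"
  let ?\<psi> = "\<lambda>z. if P z then \<phi> z else 1"
  have "eval_word ?\<psi> w = eval_word \<phi> (filter P w)" for w
    by (induction w) (simp_all add: eval_word_def)
  then show "eval_word \<phi> (filter P u) = eval_word \<phi> (filter P v)"
    using assms unfolding satisfies_def by metis
qed

lemma satisfies_power_count_list:
  fixes S :: "'a::monoid_mult itself" and c :: 'a
  assumes "satisfies S u v"
  shows "c ^ count_list u t = c ^ count_list v t"
proof -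
  have "eval_word (\<lambda>z. if z = t then c else 1) w = c ^ count_list w t" for w
    by (induction w) (simp_all add: eval_word_def)
  then show ?thesis using assms unfolding satisfies_def by metis
qed

lemma isoterm_xy_power_eq_self:
  fixes S :: "'a::monoid_mult itself"
  assumes iso: "isoterm S [a, b]" and pow: "\<And>c :: 'a. c ^ n = c"
  shows "n = 1"
proof -
  have "satisfies S [a, b] (replicate n a @ [b])"
    unfolding satisfies_def eval_word_def by (simp add: prod_list_replicate pow)
  with iso have "replicate n a @ [b] = [a, b]" unfolding isoterm_def is_word_def by blast
  then have "length (replicate n a @ [b]) = length [a, b]" by (rule arg_cong)
  then show ?thesis by simp
qed

lemma isoterm_xy_power_identity:
  fixes S :: "'a::monoid_mult itself"
  assumes iso: "isoterm S [a, b]" and pow: "\<And>c :: 'a. c ^ k = c ^ m" and "k \<le> 1"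
  shows "m = k"
proof (cases "k = 0")
  case True
  then have "c ^ Suc m = c" for c :: 'a using pow[of c] by simp
  then have "Suc m = 1" by (rule isoterm_xy_power_eq_self[OF iso])
  with True show ?thesis by simp
next
  case False
  with \<open>k \<le> 1\<close> have "k = 1" by simp
  then have "c ^ m = c" for c :: 'a using pow[of c] by simp
  then have "m = 1" by (rule isoterm_xy_power_eq_self[OF iso])
  with \<open>k = 1\<close> show ?thesis by simp
qed

lemma isoterm_xy_count_list:
  fixes S :: "'a::monoid_mult itself"
  assumes "isoterm S [a, b]" "satisfies S u v" "count_list u t \<le> 1"
  shows "count_list v t = count_list u t"
  using isoterm_xy_power_identity[OF assms(1) satisfies_power_count_list[OF assms(2)] assms(3)] .

lemma isoterm_xy_not_swap:
  fixes S :: "'a::monoid_mult itself"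
  assumes "a \<noteq> b" "isoterm S [a, b]" "t \<noteq> s"
  shows "\<not> satisfies S [t, s] [s, t]"
proof
  assume swap: "satisfies S [t, s] [s, t]"
  have "satisfies S [a, b] [b, a]"
    unfolding satisfies_def
  proof
    fix \<phi> :: "var \<Rightarrow> 'a"
    have "eval_word (\<phi>(t := \<phi> a, s := \<phi> b)) [t, s] = eval_word (\<phi>(t := \<phi> a, s := \<phi> b)) [s, t]"
      using swap unfolding satisfies_def by blast
    then show "eval_word \<phi> [a, b] = eval_word \<phi> [b, a]"
      using \<open>t \<noteq> s\<close> by (simp add: eval_word_def)
  qed
  with assms(1,2) show False unfolding isoterm_def is_word_def by auto
qed

lemma length_le_2_mset_eq:
  assumes "mset w = mset w'" "length w \<le> 2"
  shows "w = w' \<or> (\<exists>t s. w = [t, s] \<and> w' = [s, t])"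
proof -
  have "length w' = length w" by (metis assms(1) size_mset)
  then show ?thesis using assms
    by (cases w; cases w'; auto simp: add_eq_conv_ex le_Suc_eq length_Suc_conv)
qed

lemma isoterm_xy_short_identity:
  fixes S :: "'a::monoid_mult itself"
  assumes ab: "a \<noteq> b" and iso: "isoterm S [a, b]" and sat: "satisfies S w w'"
    and "length w \<le> 2" "length w' \<le> 2"
  shows "w' = w"
proof -
  have "count_list w' z = count_list w z" for z
  proof -
    consider "count_list w z \<le> 1" | "count_list w' z \<le> 1" | "count_list w z = 2 \<and> count_list w' z = 2"
      using count_le_length[of w z] count_le_length[of w' z] assms(4,5) by linarith
    then show ?thesis
    proof cases
      case 1
      then show ?thesis by (rule isoterm_xy_count_list[OF iso sat])
    next
      case 2
      then show ?thesis using isoterm_xy_count_list[OF iso satisfies_sym[OF sat]] by simp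
    qed simp
  qed
  then have "mset w = mset w'" by (simp add: multiset_eq_iff count_mset)
  from length_le_2_mset_eq[OF this assms(4)] show ?thesis
    using isoterm_xy_not_swap[OF ab iso] sat by auto (metis)
qed

theorem lemma4p3:
  fixes S :: "'a::monoid_mult itself"
    and a b x :: var and u v :: word and \<Theta> :: "var \<Rightarrow> word"
  assumes "a \<noteq> b" and "isoterm S [a, b]"
    and "is_word u" and "is_word v"
    and "satisfies S u v"
    and "is_subst \<Theta>"
    and "occ (apply_subst \<Theta> u) x = 2"
    and "occ (apply_subst \<Theta> v) x = 2"
  shows "l_map u v (theta_inv \<Theta> u (x, 1)) = Some (theta_inv \<Theta> v (x, 1)) \<and>
         l_map u v (theta_inv \<Theta> u (x, 2)) = Some (theta_inv \<Theta> v (x, 2))"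
proof -
  let ?P = "\<lambda>t. x \<in> set (\<Theta> t)"
  have cu: "count_list (apply_subst \<Theta> u) x = 2" and cv: "count_list (apply_subst \<Theta> v) x = 2"
    using assms(7,8) by (simp_all add: occ_def)
  have "filter ?P v = filter ?P u"
    using isoterm_xy_short_identity[OF assms(1,2) satisfies_filter[OF assms(5)]]
      length_filter_le_count_list_apply_subst[of x \<Theta>] cu cv by metis
  then have same: "theta_inv \<Theta> u (x, Suc i) = theta_inv \<Theta> v (x, Suc i)" if "i < 2" for i
    using theta_inv_filter[of i \<Theta> u x] theta_inv_filter[of i \<Theta> v x] cu cv that by metis
  have "l_map u v (theta_inv \<Theta> u (x, Suc i)) = Some (theta_inv \<Theta> v (x, Suc i))" if "i < 2" for i
    using theta_inv_in_range[of i \<Theta> u x] theta_inv_in_range[of i \<Theta> v x] same[OF that] that cu cv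
    by (auto simp: l_map_def occ_def)
  from this[of 0] this[of 1] show ?thesis by (simp add: numeral_2_eq_2)
qed

end
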